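(* For every propositional formula $\pi$ that is neither a tautology nor a contradiction, the formula $\langle\ddagger\pi\rangle\top \land [\ddagger\pi](\lnot\Box\pi\land\lnot\Box\lnot\pi)$ is true at every world of every serial model (a model whose relation $R$ satisfies: every world has at least one $R$-successor).
   Context: Fix a countable non-empty set $\mathit{At}$ of atoms. Formulas are built from $\top$, atoms, $\lnot$, $\land$, $\Box$ and, for each propositional formula $\pi$, the operator $[\ddagger\pi]$ ("after forgetting whether $\pi$"); $\langle\ddagger\pi\rangle\varphi:=\lnot[\ddagger\pi]\lnot\varphi$, other connectives as usual. A model is $\mathcal{M}=\langle W,R,V\rangle$ with $W\neq\varnothing$, $R\subseteq W\times W$, $V:\mathit{At}\to\mathcal{P}(W)$; standard Kripke semantics for $\Box$. A literal is an atom or its negation; a clause is a finite set $D$ of literals read as $\bigvee D$ ($\bigvee\varnothing:=\bot$), tautological if it contains $p$ and $\lnot p$ for some $p$. For propositional $\pi$, $\mathcal{C}(\pi)$ is the set of non-tautological clauses $D$ with $\models\pi\to\bigvee D$ and no $D'\subsetneq D$ with $\models\pi\to\bigvee D'$. For a model $\mathcal{M}$ and a finite family $(D_i)_{i\in I}$ of non-tautological clauses, $0\notin I$, the model $\mathcal{M}^{(D_i)_{i\in I}}_u=\langle W',R',V'\rangle$ has $W'=W\times(\{0\}\cup I)$, $(w,i)R'(v,j)$ iff $wRv$, $(w,0)\in V'(p)$ iff $w\in V(p)$, and for $i\in I$: $(w,i)\in V'(p)$ iff $\lnot p\in D_i$, or $\{p,\lnot p\}\cap D_i=\varnothing$ and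 $w\in V(p)$. $\mathcal{M},w\models[\ddagger\pi]\varphi$ iff for all $D_1\in\mathcal{C}(\pi)$ and $D_2\in\mathcal{C}(\lnot\pi)$, $\mathcal{M}^{(D_1,D_2)}_u,(w,0)\models\varphi$. *)

theory Defs
  imports Main "HOL-Library.Countable"
begin

datatype 'a pform = PTop | PAtom 'a | PNot "'a pform" | PAnd "'a pform" "'a pform"

(* Modal formulas; Forget pi phi is [\<ddagger>pi]phi *)
datatype 'a form = Top | Atom 'a | Not "'a form" | And "'a form" "'a form"
  | Box "'a form" | Forget "'a pform" "'a form"

primrec embed :: "'a pform \<Rightarrow> 'a form" where
  "embed PTop = Top"
| "embed (PAtom p) = Atom p"
| "embed (PNot f) = Not (embed f)"
| "embed (PAnd f g) = And (embed f) (embed g)"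

definition Dia :: "'a pform \<Rightarrow> 'a form \<Rightarrow> 'a form" where
  "Dia \<pi> \<phi> = Not (Forget \<pi> (Not \<phi>))"

primrec peval :: "('a \<Rightarrow> bool) \<Rightarrow> 'a pform \<Rightarrow> bool" where
  "peval v PTop = True"
| "peval v (PAtom p) = v p"
| "peval v (PNot f) = (\<not> peval v f)"
| "peval v (PAnd f g) = (peval v f \<and> peval v g)"

definition ptaut :: "'a pform \<Rightarrow> bool" where
  "ptaut \<pi> = (\<forall>v. peval v \<pi>)"

definition pcontra :: "'a pform \<Rightarrow> bool" where
  "pcontra \<pi> = (\<forall>v. \<not> peval v \<pi>)"

datatype 'a lit = Pos 'a | Neg 'a

primrec lit_true :: "('a \<Rightarrow> bool) \<Rightarrow> 'a lit \<Rightarrow> bool" where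
  "lit_true v (Pos p) = v p"
| "lit_true v (Neg p) = (\<not> v p)"

(* a clause is a finite set of literals, read disjunctively *)
definition taut_clause :: "'a lit set \<Rightarrow> bool" where
  "taut_clause D = (\<exists>p. Pos p \<in> D \<and> Neg p \<in> D)"

definition entails_clause :: "'a pform \<Rightarrow> 'a lit set \<Rightarrow> bool" where
  "entails_clause \<pi> D = (\<forall>v. peval v \<pi> \<longrightarrow> (\<exists>l\<in>D. lit_true v l))"

definition Cl :: "'a pform \<Rightarrow> 'a lit set set" where
  "Cl \<pi> = {D. finite D \<and> \<not> taut_clause D \<and> entails_clause \<pi> D
              \<and> \<not> (\<exists>D'. D' \<subset> D \<and> entails_clause \<pi> D')}"

record ('a, 'w) model =
  Wd :: "'w set"
  Rel :: "('w \<times> 'w) set"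
  Val :: "'a \<Rightarrow> 'w set"

definition is_model :: "('a, 'w) model \<Rightarrow> bool" where
  "is_model M = (Wd M \<noteq> {} \<and> Rel M \<subseteq> Wd M \<times> Wd M \<and> (\<forall>p. Val M p \<subseteq> Wd M))"

definition serial :: "('a, 'w) model \<Rightarrow> bool" where
  "serial M = (\<forall>w\<in>Wd M. \<exists>v. (w, v) \<in> Rel M)"

(* Internal world representation: a world is a pair (w, l), where w is a world of the
   original model and l records the indices chosen by the successive updates
   (most recent first).  The update with clauses Ds = [D_1,...,D_n] replaces world x
   by the copies (fst x, i # snd x), i \<in> {0..n}; this is W \<times> ({0} \<union> I) with I = {1..n}. *)
definition upd :: "('a, 'w \<times> nat list) model \<Rightarrow> 'a lit set list \<Rightarrow> ('a, 'w \<times> nat list) model" where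
  "upd M Ds = \<lparr> Wd = {(w, i # l) | w l i. (w, l) \<in> Wd M \<and> i \<le> length Ds},
      Rel = {((w, i # l), (v, j # m)) | w l i v m j.
               ((w, l), (v, m)) \<in> Rel M \<and> i \<le> length Ds \<and> j \<le> length Ds},
      Val = (\<lambda>p. {(w, i # l) | w l i. (w, l) \<in> Wd M \<and> i \<le> length Ds \<and>
               (if i = 0 then (w, l) \<in> Val M p
                else (Neg p \<in> Ds ! (i - 1) \<or>
                      (Pos p \<notin> Ds ! (i - 1) \<and> Neg p \<notin> Ds ! (i - 1) \<and> (w, l) \<in> Val M p)))}) \<rparr>"

primrec sat :: "('a, 'w \<times> nat list) model \<Rightarrow> 'w \<times> nat list \<Rightarrow> 'a form \<Rightarrow> bool" where
  "sat M x Top = True"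
| "sat M x (Atom p) = (x \<in> Val M p)"
| "sat M x (Not f) = (\<not> sat M x f)"
| "sat M x (And f g) = (sat M x f \<and> sat M x g)"
| "sat M x (Box f) = (\<forall>y. (x, y) \<in> Rel M \<longrightarrow> sat M y f)"
| "sat M x (Forget \<pi> f) =
     (\<forall>D1\<in>Cl \<pi>. \<forall>D2\<in>Cl (PNot \<pi>). sat (upd M [D1, D2]) (fst x, 0 # snd x) f)"

definition lift :: "('a, 'w) model \<Rightarrow> ('a, 'w \<times> nat list) model" where
  "lift M = \<lparr> Wd = {(w, []) | w. w \<in> Wd M},
             Rel = {((w, []), (v, [])) | w v. (w, v) \<in> Rel M},
             Val = (\<lambda>p. {(w, []) | w. w \<in> Val M p}) \<rparr>"

definition holds :: "('a, 'w) model \<Rightarrow> 'w \<Rightarrow> 'a form \<Rightarrow> bool" where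
  "holds M w \<phi> = sat (lift M) (w, []) \<phi>"

end

theory Submission
  imports Defs
begin

text \<open>Updating a world by a non-tautological clause \<open>D\<close> makes every literal of \<open>D\<close> false
there, so the updated world refutes \<open>\<Or>D\<close> and hence every \<open>\<pi>\<close> with \<open>D \<in> \<C>(\<pi>)\<close>.
A valuation falsifying \<open>\<pi>\<close> yields the clause of literals it falsifies on the atoms of \<open>\<pi>\<close>;
this clause is entailed by \<open>\<pi>\<close>, and a minimal entailed subclause lies in \<open>\<C>(\<pi>)\<close>. So
\<open>\<C>(\<pi>)\<close> and \<open>\<C>(\<not>\<pi>)\<close> are non-empty when \<open>\<pi>\<close> is contingent, which gives \<open>\<langle>\<ddagger>\<pi>\<rangle>\<top>\<close>.
By seriality the world has a successor \<open>v\<close>; after forgetting, its \<open>D\<^sub>1\<close>-copy refutes \<open>\<pi>\<close>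
and its \<open>D\<^sub>2\<close>-copy refutes \<open>\<not>\<pi>\<close>, and both are successors of the \<open>0\<close>-copy.\<close>

primrec patoms :: "'a pform \<Rightarrow> 'a set" where
  "patoms PTop = {}"
| "patoms (PAtom p) = {p}"
| "patoms (PNot f) = patoms f"
| "patoms (PAnd f g) = patoms f \<union> patoms g"

lemma finite_patoms: "finite (patoms f)"
  by (induction f) auto

lemma peval_cong: "(\<And>p. p \<in> patoms f \<Longrightarrow> u p = v p) \<Longrightarrow> peval u f = peval v f"
  by (induction f) auto

lemma sat_embed: "sat M x (embed f) = peval (\<lambda>p. x \<in> Val M p) f"
  by (induction f) auto

definition countermodel_clause :: "('a \<Rightarrow> bool) \<Rightarrow> 'a pform \<Rightarrow> 'a lit set" where
  "countermodel_clause v f = (\<lambda>p. if v p then Neg p else Pos p) ` patoms f"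

lemma finite_countermodel_clause: "finite (countermodel_clause v f)"
  unfolding countermodel_clause_def using finite_patoms by blast

lemma countermodel_clause_not_taut: "\<not> taut_clause (countermodel_clause v f)"
  unfolding countermodel_clause_def taut_clause_def by (auto split: if_splits)

lemma entails_countermodel_clause:
  assumes "\<not> peval v f"
  shows "entails_clause f (countermodel_clause v f)"
  unfolding entails_clause_def
proof (intro allI impI)
  fix u assume u: "peval u f"
  show "\<exists>l\<in>countermodel_clause v f. lit_true u l"
  proof (rule ccontr)
    assume "\<not> ?thesis"
    then have "u p = v p" if "p \<in> patoms f" for p
      using that unfolding countermodel_clause_def by (cases "v p") force+
    then have "peval u f = peval v f" by (rule peval_cong)
    with u assms show False by simp
  qed
qed

lemma ex_Cl_subclause:
  assumes "finite D" "\<not> taut_clause D" "entails_clause f D"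
  shows "\<exists>D'\<in>Cl f. D' \<subseteq> D"
proof -
  let ?E = "{D'. D' \<subseteq> D \<and> entails_clause f D'}"
  have "finite ?E" using assms(1) by simp
  moreover have "D \<in> ?E" using assms(3) by blast
  ultimately obtain D' where D': "D' \<in> ?E" and min: "\<forall>D''\<in>?E. D'' \<subseteq> D' \<longrightarrow> D' = D''"
    using finite_has_minimal[of ?E] by blast
  have "\<not> (\<exists>D''. D'' \<subset> D' \<and> entails_clause f D'')"
    using D' min by blast
  moreover have "finite D'" "\<not> taut_clause D'"
    using D' assms(1,2) finite_subset unfolding taut_clause_def by blast+
  ultimately have "D' \<in> Cl f" using D' unfolding Cl_def by blast
  with D' show ?thesis by blast
qed

lemma Cl_nonempty: "\<not> peval v f \<Longrightarrow> Cl f \<noteq> {}"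
  using ex_Cl_subclause[OF finite_countermodel_clause countermodel_clause_not_taut
      entails_countermodel_clause] by blast

definition clause_upd :: "'a lit set \<Rightarrow> ('a \<Rightarrow> bool) \<Rightarrow> 'a \<Rightarrow> bool" where
  "clause_upd D P p = (Neg p \<in> D \<or> (Pos p \<notin> D \<and> Neg p \<notin> D \<and> P p))"

lemma not_peval_clause_upd:
  assumes "D \<in> Cl f"
  shows "\<not> peval (clause_upd D P) f"
proof
  assume "peval (clause_upd D P) f"
  moreover from assms have "\<not> taut_clause D" and "entails_clause f D"
    unfolding Cl_def by auto
  ultimately obtain l where "l \<in> D" "lit_true (clause_upd D P) l"
    unfolding entails_clause_def by blast
  with \<open>\<not> taut_clause D\<close> show False
    unfolding taut_clause_def clause_upd_def by (cases l) auto
qed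

lemma upd_Rel:
  "(x, y) \<in> Rel M \<Longrightarrow> i \<le> length Ds \<Longrightarrow> j \<le> length Ds \<Longrightarrow>
   ((fst x, i # snd x), (fst y, j # snd y)) \<in> Rel (upd M Ds)"
  unfolding upd_def by (cases x, cases y) auto

lemma upd_Val_Suc:
  "y \<in> Wd M \<Longrightarrow> i < length Ds \<Longrightarrow>
   (fst y, Suc i # snd y) \<in> Val (upd M Ds) p \<longleftrightarrow> clause_upd (Ds ! i) (\<lambda>q. y \<in> Val M q) p"
  unfolding upd_def clause_upd_def by (cases y) auto

lemma not_sat_Box_upd:
  assumes "(x, y) \<in> Rel M" "y \<in> Wd M" "i < length Ds" "Ds ! i \<in> Cl f"
  shows "\<not> sat (upd M Ds) (fst x, 0 # snd x) (Box (embed f))"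
proof -
  have "(\<lambda>p. (fst y, Suc i # snd y) \<in> Val (upd M Ds) p) = clause_upd (Ds ! i) (\<lambda>q. y \<in> Val M q)"
    using upd_Val_Suc[OF assms(2,3)] by blast
  then have "\<not> sat (upd M Ds) (fst y, Suc i # snd y) (embed f)"
    unfolding sat_embed using not_peval_clause_upd[OF assms(4)] by simp
  moreover have "((fst x, 0 # snd x), (fst y, Suc i # snd y)) \<in> Rel (upd M Ds)"
    using upd_Rel[OF assms(1)] assms(3) by simp
  ultimately show ?thesis by auto
qed

theorem corollary1:
  fixes \<pi> :: "'a::countable pform" and M :: "('a, 'w) model" and w :: 'w
  assumes "\<not> ptaut \<pi>" and "\<not> pcontra \<pi>"
    and "is_model M" and "serial M" and "w \<in> Wd M"
  shows "holds M w (And (Dia \<pi> Top)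
           (Forget \<pi> (And (Not (Box (embed \<pi>))) (Not (Box (Not (embed \<pi>)))))))"
proof -
  obtain v1 v2 where "\<not> peval v1 \<pi>" "\<not> peval v2 (PNot \<pi>)"
    using assms(1,2) unfolding ptaut_def pcontra_def by auto
  then have nonempty: "Cl \<pi> \<noteq> {}" "Cl (PNot \<pi>) \<noteq> {}"
    using Cl_nonempty by blast+
  obtain v where v: "(w, v) \<in> Rel M" using assms(4,5) unfolding serial_def by blast
  then have succ: "((w, []), (v, [])) \<in> Rel (lift M)" "(v, []) \<in> Wd (lift M)"
    using assms(3) unfolding is_model_def lift_def by auto
  have "\<not> sat (upd (lift M) [D1, D2]) (w, [0]) (Box (embed \<pi>))"
       "\<not> sat (upd (lift M) [D1, D2]) (w, [0]) (Box (embed (PNot \<pi>)))"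
    if "D1 \<in> Cl \<pi>" "D2 \<in> Cl (PNot \<pi>)" for D1 D2
    using not_sat_Box_upd[OF succ, of _ "[D1, D2]"] that by force+
  then show ?thesis
    unfolding holds_def Dia_def using nonempty by auto
qed

end
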